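(* Let $p_1,p_3,\beta,q_0,q_1,q_2\in\mathbb{R}$ satisfy $q_2=5(q_1-2q_0)$ and either $p_3=0$ or $\beta=\tfrac12$. Then there is a polynomial $F$ in $u,u_x,u_{xx},u_{3x},u_{4x}$ such that for every smooth solution $u(x,t)$ of $$u_t=p_1(u^2)_x+p_3(uu_{xx}+\beta u_x^2)_x+q_0uu_{5x}+q_1u_xu_{4x}+q_2u_{2x}u_{3x}$$ one has $\partial_t(u^2)=\partial_x\big(F(u,u_x,\dots,u_{4x})\big)$. Consequently, for solutions that decay rapidly at $x\to\pm\infty$ together with their $x$-derivatives, $\int_{-\infty}^{\infty}u^2\,dx$ is independent of $t$.
   Context: Subscripts denote partial derivatives, $u_{kx}=\partial_x^k u$. *)

theory Defs
  imports "HOL-Analysis.Analysis"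
begin

definition Dx :: "nat \<Rightarrow> (real \<Rightarrow> real \<Rightarrow> real) \<Rightarrow> real \<Rightarrow> real \<Rightarrow> real" where
  "Dx k f x t = (deriv ^^ k) (\<lambda>y. f y t) x"

definition Dt :: "(real \<Rightarrow> real \<Rightarrow> real) \<Rightarrow> real \<Rightarrow> real \<Rightarrow> real" where
  "Dt f x t = deriv (\<lambda>s. f x s) t"

text \<open>Smoothness (C-infinity on R^2): the function is jointly continuous and both
  first partial derivatives exist everywhere and are again smooth.\<close>

coinductive smooth2 :: "(real \<Rightarrow> real \<Rightarrow> real) \<Rightarrow> bool" where
  "continuous_on UNIV (\<lambda>(x, t). f x t) \<Longrightarrow>
   (\<forall>x t. ((\<lambda>y. f y t) has_real_derivative fx x t) (at x)) \<Longrightarrow>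
   (\<forall>x t. ((\<lambda>s. f x s) has_real_derivative ft x t) (at t)) \<Longrightarrow>
   smooth2 fx \<Longrightarrow> smooth2 ft \<Longrightarrow> smooth2 f"

definition is_poly5 :: "(real \<Rightarrow> real \<Rightarrow> real \<Rightarrow> real \<Rightarrow> real \<Rightarrow> real) \<Rightarrow> bool" where
  "is_poly5 F \<longleftrightarrow> (\<exists>(S :: (nat \<times> nat \<times> nat \<times> nat \<times> nat) set) c. finite S \<and>
     (\<forall>a b d e g. F a b d e g =
        (\<Sum>(i, j, k, l, n)\<in>S. c (i, j, k, l, n) * a ^ i * b ^ j * d ^ k * e ^ l * g ^ n)))"

definition solves_eq :: "real \<Rightarrow> real \<Rightarrow> real \<Rightarrow> real \<Rightarrow> real \<Rightarrow> real \<Rightarrow>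
    (real \<Rightarrow> real \<Rightarrow> real) \<Rightarrow> bool" where
  "solves_eq p1 p3 \<beta> q0 q1 q2 u \<longleftrightarrow> (\<forall>x t.
     Dt u x t =
       p1 * Dx 1 (\<lambda>y s. (u y s)\<^sup>2) x t
     + p3 * Dx 1 (\<lambda>y s. u y s * Dx 2 u y s + \<beta> * (Dx 1 u y s)\<^sup>2) x t
     + q0 * u x t * Dx 5 u x t + q1 * Dx 1 u x t * Dx 4 u x t
     + q2 * Dx 2 u x t * Dx 3 u x t)"

definition rapid_decay :: "(real \<Rightarrow> real \<Rightarrow> real) \<Rightarrow> bool" where
  "rapid_decay u \<longleftrightarrow> (\<forall>a b k n. \<exists>C. \<forall>x t. a \<le> t \<and> t \<le> b \<longrightarrow>
      \<bar>x\<bar> ^ n * \<bar>Dx k u x t\<bar> \<le> C)"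

end

theory Submission
  imports Defs "HOL-Probability.Sinc_Integral"
begin

text \<open>Multiplying the equation by 2u makes every term an exact x-derivative:
  2u (u^2)_x = (4/3 u^3)_x; 2u (u u_xx + u_x^2/2)_x = 2 (u^2 u_xx)_x, which is where \<open>\<beta> = 1/2\<close>
  is needed unless p3 = 0; and 2u (q0 u u_5x + q1 u_x u_4x + q2 u_xx u_3x) is the x-derivative of
  2 q0 u^2 u_4x + (2 q1 - 4 q0) (u u_x u_3x + 2 u u_xx^2 - u_x^2 u_xx) exactly when q2 = 5 (q1 - 2 q0).
  Integrating (u^2)_t = F_x over [-R, R] \<times> [t1, t2] and swapping the integrals, the change of
  the integral of u^2 over [-R, R] is the time integral of F(R) - F(-R). Since F is cubic in rapidly
  decaying quantities this is O(1/R), and dominated convergence lets R tend to infinity.\<close>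

lemma Dx_0 [simp]: "Dx 0 u = u"
  by (simp add: Dx_def fun_eq_iff)

lemma Dx_Suc: "Dx (Suc k) u = (\<lambda>x t. deriv (\<lambda>y. Dx k u y t) x)"
  by (simp add: Dx_def fun_eq_iff)

lemma Dx_1_eqI: "((\<lambda>y. f y t) has_real_derivative D) (at x) \<Longrightarrow> Dx 1 f x t = D"
  by (simp add: Dx_def DERIV_imp_deriv)

lemma smooth2_continuous: "smooth2 f \<Longrightarrow> continuous_on UNIV (\<lambda>p. f (fst p) (snd p))"
  by (erule smooth2.cases) (simp add: case_prod_unfold)

lemma smooth2_partial_x:
  assumes "smooth2 f"
  shows "smooth2 (\<lambda>x t. deriv (\<lambda>y. f y t) x)"
    and "((\<lambda>y. f y t) has_real_derivative deriv (\<lambda>y. f y t) x) (at x)"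
proof -
  obtain fx where "smooth2 fx" and fx: "\<And>x t. ((\<lambda>y. f y t) has_real_derivative fx x t) (at x)"
    using assms by cases blast
  moreover have "(\<lambda>x t. deriv (\<lambda>y. f y t) x) = fx"
    using fx by (auto simp: fun_eq_iff intro!: DERIV_imp_deriv)
  ultimately show "smooth2 (\<lambda>x t. deriv (\<lambda>y. f y t) x)"
    and "((\<lambda>y. f y t) has_real_derivative deriv (\<lambda>y. f y t) x) (at x)"
    by (metis (no_types))+
qed

lemma smooth2_partial_t:
  assumes "smooth2 f"
  shows "smooth2 (Dt f)"
    and "((\<lambda>s. f x s) has_real_derivative Dt f x t) (at t)"
proof -
  obtain ft where "smooth2 ft" and ft: "\<And>x t. ((\<lambda>s. f x s) has_real_derivative ft x t) (at t)"
    using assms by cases blast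
  moreover have "Dt f = ft"
    using ft by (auto simp: fun_eq_iff Dt_def intro!: DERIV_imp_deriv)
  ultimately show "smooth2 (Dt f)" and "((\<lambda>s. f x s) has_real_derivative Dt f x t) (at t)"
    by (metis (no_types))+
qed

lemma smooth2_Dx: "smooth2 u \<Longrightarrow> smooth2 (Dx k u)"
  by (induction k) (simp_all add: Dx_Suc smooth2_partial_x)

lemma has_real_derivative_Dx:
  "smooth2 u \<Longrightarrow> ((\<lambda>y. Dx k u y t) has_real_derivative Dx (Suc k) u x t) (at x)"
  by (simp add: Dx_Suc smooth2_partial_x(2) smooth2_Dx)

lemma has_real_derivative_Dx_upto_4:
  assumes "smooth2 u"
  shows "((\<lambda>y. u y t) has_real_derivative Dx 1 u x t) (at x)"
    and "((\<lambda>y. Dx 1 u y t) has_real_derivative Dx 2 u x t) (at x)"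
    and "((\<lambda>y. Dx 2 u y t) has_real_derivative Dx 3 u x t) (at x)"
    and "((\<lambda>y. Dx 3 u y t) has_real_derivative Dx 4 u x t) (at x)"
    and "((\<lambda>y. Dx 4 u y t) has_real_derivative Dx 5 u x t) (at x)"
  using has_real_derivative_Dx[OF assms, of 0] has_real_derivative_Dx[OF assms, of 1]
    has_real_derivative_Dx[OF assms, of 2] has_real_derivative_Dx[OF assms, of 3]
    has_real_derivative_Dx[OF assms, of 4]
  by (simp_all add: numeral_eq_Suc)

lemma continuous_on_smooth2_x: "smooth2 f \<Longrightarrow> continuous_on S (\<lambda>x. f x t)"
  using DERIV_isCont[OF smooth2_partial_x(2)] by (blast intro: continuous_at_imp_continuous_on)

lemma continuous_on_smooth2_t: "smooth2 f \<Longrightarrow> continuous_on S (\<lambda>t. f x t)"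
  using DERIV_isCont[OF smooth2_partial_t(2)] by (blast intro: continuous_at_imp_continuous_on)

lemma integral_Icc_diff_eq_boundary_integral:
  fixes w G H :: "real \<Rightarrow> real \<Rightarrow> real"
  assumes contH: "continuous_on UNIV (\<lambda>p. H (fst p) (snd p))"
    and dt: "\<And>x t. ((\<lambda>s. w x s) has_real_derivative H x t) (at t)"
    and dx: "\<And>x t. ((\<lambda>y. G y t) has_real_derivative H x t) (at x)"
    and contw: "\<And>t. continuous_on UNIV (\<lambda>x. w x t)"
    and "0 \<le> R" and "t1 \<le> t2"
  shows "integral {-R..R} (\<lambda>x. w x t2) - integral {-R..R} (\<lambda>x. w x t1)
    = integral {t1..t2} (\<lambda>t. G R t - G (-R) t)"
proof -
  have "((\<lambda>t. H x t) has_integral w x t2 - w x t1) {t1..t2}" for x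
    using \<open>t1 \<le> t2\<close> dt[unfolded has_real_derivative_iff_has_vector_derivative]
    by (intro fundamental_theorem_of_calculus) (auto intro: has_vector_derivative_at_within)
  then have time: "integral {t1..t2} (H x) = w x t2 - w x t1" for x
    by (simp add: integral_unique)
  have "((\<lambda>x. H x t) has_integral G R t - G (-R) t) {-R..R}" for t
    using \<open>0 \<le> R\<close> dx[unfolded has_real_derivative_iff_has_vector_derivative]
    by (intro fundamental_theorem_of_calculus) (auto intro: has_vector_derivative_at_within)
  then have space: "integral {-R..R} (\<lambda>x. H x t) = G R t - G (-R) t" for t
    by (simp add: integral_unique)
  have "continuous_on (cbox (-R, t1) (R, t2)) (\<lambda>(x, t). H x t)"
    using continuous_on_subset[OF contH] by (simp add: case_prod_unfold)
  then have Fubini: "integral {-R..R} (\<lambda>x. integral {t1..t2} (H x))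
      = integral {t1..t2} (\<lambda>t. integral {-R..R} (\<lambda>x. H x t))"
    by (metis integral_swap_continuous cbox_interval)
  have "\<And>t. (\<lambda>x. w x t) integrable_on {-R..R}"
    by (rule integrable_continuous_interval[OF continuous_on_subset[OF contw]]) auto
  then have "integral {-R..R} (\<lambda>x. w x t2) - integral {-R..R} (\<lambda>x. w x t1)
      = integral {-R..R} (\<lambda>x. w x t2 - w x t1)"
    by (simp add: integral_diff)
  also have "\<dots> = integral {t1..t2} (\<lambda>t. G R t - G (-R) t)"
    using Fubini by (simp add: time space)
  finally show ?thesis .
qed

lemma tendsto_integral_symmetric_Icc:
  fixes f g :: "real \<Rightarrow> real"
  assumes "continuous_on UNIV f" and "g integrable_on UNIV" and "\<And>x. \<bar>f x\<bar> \<le> g x"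
  shows "(\<lambda>n. integral {-real n..real n} f) \<longlonglongrightarrow> integral UNIV f"
proof -
  define f' where "f' n x = (if x \<in> {-real n..real n} then f x else 0)" for n x
  have "f' n integrable_on UNIV" for n
    unfolding f'_def integrable_restrict_UNIV
    by (rule integrable_continuous_interval[OF continuous_on_subset[OF assms(1)]]) auto
  moreover have "norm (f' n x) \<le> g x" for n x
    using assms(3)[of x] by (auto simp: f'_def)
  moreover have "(\<lambda>n. f' n x) \<longlonglongrightarrow> f x" for x
  proof (rule tendsto_eventually)
    obtain N :: nat where "\<bar>x\<bar> \<le> real N"
      using real_arch_simple by blast
    then show "\<forall>\<^sub>F n in sequentially. f' n x = f x"
      unfolding eventually_sequentially f'_def by (intro exI[of _ N]) auto
  qed
  ultimately have "(\<lambda>n. integral UNIV (f' n)) \<longlonglongrightarrow> integral UNIV f"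
    by (rule dominated_convergence(2)[OF _ assms(2)])
  moreover have "integral UNIV (f' n) = integral {-real n..real n} f" for n
    unfolding f'_def by (rule Henstock_Kurzweil_Integration.integral_restrict_UNIV)
  ultimately show ?thesis
    by simp
qed

lemma boundary_integral_tendsto_0:
  fixes G :: "real \<Rightarrow> real \<Rightarrow> real"
  assumes contG: "\<And>x. continuous_on UNIV (G x)" and "a \<le> b"
    and K: "\<And>x t. a \<le> t \<Longrightarrow> t \<le> b \<Longrightarrow> 1 \<le> \<bar>x\<bar> \<Longrightarrow> \<bar>G x t\<bar> \<le> K / \<bar>x\<bar>"
  shows "(\<lambda>n. integral {a..b} (\<lambda>t. G (real n) t - G (- real n) t)) \<longlonglongrightarrow> 0"
proof (rule Lim_null_comparison)
  have "norm (integral {a..b} (\<lambda>t. G (real n) t - G (- real n) t)) \<le> 2 * K / real n * (b - a)"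
    if "1 \<le> n" for n
  proof (rule integral_bound[OF \<open>a \<le> b\<close>])
    show "continuous_on {a..b} (\<lambda>t. G (real n) t - G (- real n) t)"
      by (intro continuous_intros continuous_on_subset[OF contG]) auto
    show "norm (G (real n) t - G (- real n) t) \<le> 2 * K / real n" if "t \<in> {a..b}" for t
      using K[of t "real n"] K[of t "- real n"] that \<open>1 \<le> n\<close> by simp
  qed
  then show "\<forall>\<^sub>F n in sequentially.
      norm (integral {a..b} (\<lambda>t. G (real n) t - G (- real n) t)) \<le> 2 * K / real n * (b - a)"
    by (rule eventually_sequentiallyI[of 1])
  show "(\<lambda>n. 2 * K / real n * (b - a)) \<longlonglongrightarrow> 0"
    by (intro tendsto_mult_left_zero lim_const_over_n)
qed

lemma integral_conserved:
  fixes w G H :: "real \<Rightarrow> real \<Rightarrow> real"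
  assumes contH: "continuous_on UNIV (\<lambda>p. H (fst p) (snd p))"
    and contG: "\<And>x. continuous_on UNIV (G x)"
    and dt: "\<And>x t. ((\<lambda>s. w x s) has_real_derivative H x t) (at t)"
    and dx: "\<And>x t. ((\<lambda>y. G y t) has_real_derivative H x t) (at x)"
    and contw: "\<And>t. continuous_on UNIV (\<lambda>x. w x t)"
    and decay: "\<And>a b. \<exists>K. \<forall>x t. a \<le> t \<longrightarrow> t \<le> b \<longrightarrow> 1 \<le> \<bar>x\<bar> \<longrightarrow> \<bar>G x t\<bar> \<le> K / \<bar>x\<bar>"
    and dom: "\<And>t. \<exists>g. g integrable_on UNIV \<and> (\<forall>x. \<bar>w x t\<bar> \<le> g x)"
  shows "integral UNIV (\<lambda>x. w x t1) = integral UNIV (\<lambda>x. w x t2)"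
proof (induction t1 t2 rule: linorder_wlog)
  case (le a b)
  have lim: "(\<lambda>n. integral {-real n..real n} (\<lambda>x. w x t)) \<longlonglongrightarrow> integral UNIV (\<lambda>x. w x t)" for t
    using dom[of t] contw by (blast intro: tendsto_integral_symmetric_Icc)
  obtain K where K: "\<And>x t. a \<le> t \<Longrightarrow> t \<le> b \<Longrightarrow> 1 \<le> \<bar>x\<bar> \<Longrightarrow> \<bar>G x t\<bar> \<le> K / \<bar>x\<bar>"
    using decay[of a b] by blast
  have "(\<lambda>n. integral {a..b} (\<lambda>t. G (real n) t - G (- real n) t)) \<longlonglongrightarrow> 0"
    by (rule boundary_integral_tendsto_0[OF contG le K])
  moreover have "integral {a..b} (\<lambda>t. G (real n) t - G (- real n) t)
      = integral {-real n..real n} (\<lambda>x. w x b) - integral {-real n..real n} (\<lambda>x. w x a)" for n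
    using integral_Icc_diff_eq_boundary_integral[OF contH dt dx contw _ le] by simp
  ultimately have "(\<lambda>n. integral {-real n..real n} (\<lambda>x. w x b)
      - integral {-real n..real n} (\<lambda>x. w x a)) \<longlonglongrightarrow> 0"
    by simp
  moreover have "(\<lambda>n. integral {-real n..real n} (\<lambda>x. w x b) - integral {-real n..real n} (\<lambda>x. w x a))
      \<longlonglongrightarrow> integral UNIV (\<lambda>x. w x b) - integral UNIV (\<lambda>x. w x a)"
    by (intro tendsto_diff lim)
  ultimately show ?case
    using LIMSEQ_unique by fastforce
qed simp

definition flux :: "real \<Rightarrow> real \<Rightarrow> real \<Rightarrow> real \<Rightarrow> real \<Rightarrow> real \<Rightarrow> real \<Rightarrow> real \<Rightarrow> real \<Rightarrow> real" where
  "flux p1 p3 q0 q1 u u1 u2 u3 u4 = 4/3 * p1 * u^3 + 2 * p3 * u^2 * u2 + 2 * q0 * u^2 * u4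
     + (2 * q1 - 4 * q0) * (u * u1 * u3 + 2 * u * u2^2 - u1^2 * u2)"

lemma is_poly5_flux: "is_poly5 (flux p1 p3 q0 q1)"
  unfolding is_poly5_def
  by (rule exI[of _ "{(3,0,0,0,0),(2,0,1,0,0),(2,0,0,0,1),(1,1,0,1,0),(1,0,2,0,0),(0,2,1,0,0)}"],
      rule exI[of _ "\<lambda>m. if m = (3,0,0,0,0) then 4/3 * p1 else if m = (2,0,1,0,0) then 2 * p3
     else if m = (2,0,0,0,1) then 2 * q0 else if m = (1,1,0,1,0) then 2 * q1 - 4 * q0
     else if m = (1,0,2,0,0) then 2 * (2 * q1 - 4 * q0) else - (2 * q1 - 4 * q0)"])
    (simp add: flux_def algebra_simps)

definition expanded_rhs :: "real \<Rightarrow> real \<Rightarrow> real \<Rightarrow> real \<Rightarrow> real \<Rightarrow> real \<Rightarrow>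
    (real \<Rightarrow> real \<Rightarrow> real) \<Rightarrow> real \<Rightarrow> real \<Rightarrow> real" where
  "expanded_rhs p1 p3 \<beta> q0 q1 q2 u x t =
     p1 * 2 * u x t * Dx 1 u x t
   + p3 * (Dx 1 u x t * Dx 2 u x t + u x t * Dx 3 u x t + 2 * \<beta> * Dx 1 u x t * Dx 2 u x t)
   + q0 * u x t * Dx 5 u x t + q1 * Dx 1 u x t * Dx 4 u x t + q2 * Dx 2 u x t * Dx 3 u x t"

lemma Dt_eq_expanded_rhs:
  assumes "smooth2 u" and "solves_eq p1 p3 \<beta> q0 q1 q2 u"
  shows "Dt u x t = expanded_rhs p1 p3 \<beta> q0 q1 q2 u x t"
proof -
  note d = has_real_derivative_Dx_upto_4[OF assms(1)]
  have "Dx 1 (\<lambda>y s. (u y s)\<^sup>2) x t = 2 * u x t * Dx 1 u x t"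
    by (rule Dx_1_eqI) (rule derivative_eq_intros d refl | simp)+
  moreover have "Dx 1 (\<lambda>y s. u y s * Dx 2 u y s + \<beta> * (Dx 1 u y s)\<^sup>2) x t
      = Dx 1 u x t * Dx 2 u x t + u x t * Dx 3 u x t + 2 * \<beta> * Dx 1 u x t * Dx 2 u x t"
    by (rule Dx_1_eqI) (rule derivative_eq_intros d refl | simp)+
  ultimately show ?thesis
    using assms(2) by (simp add: solves_eq_def expanded_rhs_def)
qed

lemma flux_has_real_derivative:
  assumes "smooth2 u" and "q2 = 5 * (q1 - 2 * q0)" and "p3 = 0 \<or> \<beta> = 1/2"
  shows "((\<lambda>y. flux p1 p3 q0 q1 (u y t) (Dx 1 u y t) (Dx 2 u y t) (Dx 3 u y t) (Dx 4 u y t))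
    has_real_derivative 2 * u x t * expanded_rhs p1 p3 \<beta> q0 q1 q2 u x t) (at x)"
  unfolding flux_def
  by (rule derivative_eq_intros has_real_derivative_Dx_upto_4[OF assms(1)] refl | simp)+
    (use assms(3) in \<open>elim disjE; simp add: expanded_rhs_def assms(2) algebra_simps
      power2_eq_square power3_eq_cube\<close>)

lemma Dt_square:
  assumes "smooth2 u"
  shows "Dt (\<lambda>x t. (u x t)\<^sup>2) = (\<lambda>x t. 2 * u x t * Dt u x t)"
    and "((\<lambda>s. (u x s)\<^sup>2) has_real_derivative Dt (\<lambda>x t. (u x t)\<^sup>2) x t) (at t)"
proof -
  have d: "((\<lambda>s. (u x s)\<^sup>2) has_real_derivative 2 * u x t * Dt u x t) (at t)" for x t
    using smooth2_partial_t(2)[OF assms] by (auto intro!: derivative_eq_intros)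
  then have "Dt (\<lambda>x t. (u x t)\<^sup>2) x t = 2 * u x t * Dt u x t" for x t
    unfolding Dt_def[of "\<lambda>x t. (u x t)\<^sup>2"] by (rule DERIV_imp_deriv)
  with d show "Dt (\<lambda>x t. (u x t)\<^sup>2) = (\<lambda>x t. 2 * u x t * Dt u x t)"
    and "((\<lambda>s. (u x s)\<^sup>2) has_real_derivative Dt (\<lambda>x t. (u x t)\<^sup>2) x t) (at t)"
    by (simp_all add: fun_eq_iff)
qed

lemma local_conservation_law:
  assumes "smooth2 u" and "solves_eq p1 p3 \<beta> q0 q1 q2 u"
    and "q2 = 5 * (q1 - 2 * q0)" and "p3 = 0 \<or> \<beta> = 1/2"
  shows "((\<lambda>y. flux p1 p3 q0 q1 (u y t) (Dx 1 u y t) (Dx 2 u y t) (Dx 3 u y t) (Dx 4 u y t))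
    has_real_derivative Dt (\<lambda>x t. (u x t)\<^sup>2) x t) (at x)"
  using flux_has_real_derivative[OF assms(1,3,4)]
  by (simp add: Dt_square(1)[OF assms(1)] Dt_eq_expanded_rhs[OF assms(1,2)])

lemma abs_flux_le:
  assumes "\<bar>u\<bar> \<le> \<delta>" "\<bar>u1\<bar> \<le> \<delta>" "\<bar>u2\<bar> \<le> \<delta>" "\<bar>u3\<bar> \<le> \<delta>" "\<bar>u4\<bar> \<le> \<delta>"
  shows "\<bar>flux p1 p3 q0 q1 u u1 u2 u3 u4\<bar>
    \<le> (4/3 * \<bar>p1\<bar> + 2 * \<bar>p3\<bar> + 2 * \<bar>q0\<bar> + 4 * \<bar>2 * q1 - 4 * q0\<bar>) * \<delta>^3"
proof -
  let ?c = "2 * q1 - 4 * q0"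
  have cube: "\<bar>k * (a * b * d)\<bar> \<le> \<bar>k\<bar> * \<delta>^3"
    if "\<bar>a\<bar> \<le> \<delta>" "\<bar>b\<bar> \<le> \<delta>" "\<bar>d\<bar> \<le> \<delta>" for k a b d :: real
  proof -
    have "\<bar>a * b * d\<bar> \<le> \<delta> * \<delta> * \<delta>"
      unfolding abs_mult using that by (intro mult_mono) auto
    then show ?thesis
      by (simp add: abs_mult mult_left_mono power3_eq_cube)
  qed
  have "flux p1 p3 q0 q1 u u1 u2 u3 u4 = 4/3 * p1 * (u * u * u) + 2 * p3 * (u * u * u2)
      + 2 * q0 * (u * u * u4) + ?c * (u * u1 * u3) + 2 * ?c * (u * u2 * u2) + (- ?c) * (u1 * u1 * u2)"
    by (simp add: flux_def power2_eq_square power3_eq_cube algebra_simps)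
  then have "\<bar>flux p1 p3 q0 q1 u u1 u2 u3 u4\<bar> \<le> \<bar>4/3 * p1 * (u * u * u)\<bar> + \<bar>2 * p3 * (u * u * u2)\<bar>
      + \<bar>2 * q0 * (u * u * u4)\<bar> + \<bar>?c * (u * u1 * u3)\<bar> + \<bar>2 * ?c * (u * u2 * u2)\<bar>
      + \<bar>(- ?c) * (u1 * u1 * u2)\<bar>"
    by linarith
  also have "\<dots> \<le> \<bar>4/3 * p1\<bar> * \<delta>^3 + \<bar>2 * p3\<bar> * \<delta>^3 + \<bar>2 * q0\<bar> * \<delta>^3 + \<bar>?c\<bar> * \<delta>^3
      + \<bar>2 * ?c\<bar> * \<delta>^3 + \<bar>- ?c\<bar> * \<delta>^3"
    by (intro add_mono cube) (use assms in auto)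
  also have "\<dots> = (4/3 * \<bar>p1\<bar> + 2 * \<bar>p3\<bar> + 2 * \<bar>q0\<bar> + 4 * \<bar>?c\<bar>) * \<delta>^3"
    by (simp only: abs_mult abs_minus_cancel) (simp add: algebra_simps)
  finally show ?thesis .
qed

lemma rapid_decay_uniform_bound:
  assumes "rapid_decay u"
  shows "\<exists>M. \<forall>k<m. \<forall>x t. a \<le> t \<longrightarrow> t \<le> b \<longrightarrow> \<bar>x\<bar> ^ n * \<bar>Dx k u x t\<bar> \<le> M"
proof (induction m)
  case (Suc m)
  then obtain M where "\<forall>k<m. \<forall>x t. a \<le> t \<longrightarrow> t \<le> b \<longrightarrow> \<bar>x\<bar> ^ n * \<bar>Dx k u x t\<bar> \<le> M"
    by blast
  moreover obtain C where "\<forall>x t. a \<le> t \<longrightarrow> t \<le> b \<longrightarrow> \<bar>x\<bar> ^ n * \<bar>Dx m u x t\<bar> \<le> C"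
    using assms unfolding rapid_decay_def by blast
  ultimately have "\<forall>k<Suc m. \<forall>x t. a \<le> t \<longrightarrow> t \<le> b \<longrightarrow> \<bar>x\<bar> ^ n * \<bar>Dx k u x t\<bar> \<le> max M C"
    by (auto simp: less_Suc_eq max.coboundedI1 max.coboundedI2)
  then show ?case ..
qed simp

lemma flux_decay:
  assumes "rapid_decay u"
  shows "\<exists>K. \<forall>x t. a \<le> t \<longrightarrow> t \<le> b \<longrightarrow> 1 \<le> \<bar>x\<bar> \<longrightarrow>
    \<bar>flux p1 p3 q0 q1 (u x t) (Dx 1 u x t) (Dx 2 u x t) (Dx 3 u x t) (Dx 4 u x t)\<bar> \<le> K / \<bar>x\<bar>"
proof -
  obtain M where M: "\<And>k x t. k < 5 \<Longrightarrow> a \<le> t \<Longrightarrow> t \<le> b \<Longrightarrow> \<bar>x\<bar> * \<bar>Dx k u x t\<bar> \<le> M"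
    using rapid_decay_uniform_bound[OF assms, of 5 a b 1] by auto
  define K where "K = (4/3 * \<bar>p1\<bar> + 2 * \<bar>p3\<bar> + 2 * \<bar>q0\<bar> + 4 * \<bar>2 * q1 - 4 * q0\<bar>) * M^3"
  have "\<bar>flux p1 p3 q0 q1 (u x t) (Dx 1 u x t) (Dx 2 u x t) (Dx 3 u x t) (Dx 4 u x t)\<bar> \<le> K / \<bar>x\<bar>"
    if "a \<le> t" "t \<le> b" "1 \<le> \<bar>x\<bar>" for x t
  proof -
    have bound: "\<bar>Dx k u x t\<bar> \<le> M / \<bar>x\<bar>" if "k < 5" for k
      using M[OF \<open>k < 5\<close> \<open>a \<le> t\<close> \<open>t \<le> b\<close>, of x] \<open>1 \<le> \<bar>x\<bar>\<close> by (simp add: pos_le_divide_eq mult.commute)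
    have "\<bar>flux p1 p3 q0 q1 (u x t) (Dx 1 u x t) (Dx 2 u x t) (Dx 3 u x t) (Dx 4 u x t)\<bar>
        \<le> (4/3 * \<bar>p1\<bar> + 2 * \<bar>p3\<bar> + 2 * \<bar>q0\<bar> + 4 * \<bar>2 * q1 - 4 * q0\<bar>) * (M / \<bar>x\<bar>)^3"
      by (rule abs_flux_le) (use bound[of 0] bound[of 1] bound[of 2] bound[of 3] bound[of 4] in auto)
    also have "\<dots> = K / \<bar>x\<bar>^3"
      by (simp add: K_def power_divide)
    also have "\<dots> \<le> K / \<bar>x\<bar>"
    proof (rule divide_left_mono)
      have "0 \<le> M"
        using M[of 0 t x] that by (meson abs_ge_zero mult_nonneg_nonneg order_trans zero_less_numeral)
      then show "0 \<le> K"
        by (simp add: K_def)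
      show "\<bar>x\<bar> \<le> \<bar>x\<bar>^3"
        using power_increasing[of 1 3 "\<bar>x\<bar>"] \<open>1 \<le> \<bar>x\<bar>\<close> by simp
    qed (use \<open>1 \<le> \<bar>x\<bar>\<close> in simp)
    finally show ?thesis .
  qed
  then show ?thesis
    by blast
qed

lemma square_le_inverse_1_plus_square:
  assumes "rapid_decay u"
  shows "\<exists>C. \<forall>x. (u x t)\<^sup>2 \<le> C * inverse (1 + x\<^sup>2)"
proof -
  obtain C0 C1 where "\<And>x. \<bar>u x t\<bar> \<le> C0" and "\<And>x. \<bar>x\<bar> * \<bar>u x t\<bar> \<le> C1"
    using rapid_decay_uniform_bound[OF assms, of 1 t t 0] rapid_decay_uniform_bound[OF assms, of 1 t t 1]
    by auto
  then have "(u x t)\<^sup>2 \<le> C0\<^sup>2" and "(x * u x t)\<^sup>2 \<le> C1\<^sup>2" for x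
    unfolding abs_le_square_iff[symmetric] abs_mult by (meson abs_ge_self order_trans)+
  moreover have "(u x t)\<^sup>2 * (1 + x\<^sup>2) = (u x t)\<^sup>2 + (x * u x t)\<^sup>2" for x
    by (simp add: algebra_simps power_mult_distrib)
  ultimately have "(u x t)\<^sup>2 * (1 + x\<^sup>2) \<le> C0\<^sup>2 + C1\<^sup>2" for x
    by (metis add_mono)
  then have "(u x t)\<^sup>2 \<le> (C0\<^sup>2 + C1\<^sup>2) * inverse (1 + x\<^sup>2)" for x
    by (simp add: add_pos_nonneg pos_le_divide_eq divide_inverse[symmetric])
  then show ?thesis
    by blast
qed

lemma integrable_inverse_1_plus_square_UNIV: "(\<lambda>x::real. inverse (1 + x\<^sup>2)) integrable_on UNIV"
  using set_borel_integral_eq_integral(1)[OF integrable_inverse_1_plus_square]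
  by (simp add: einterval_def)

lemma integral_square_conserved:
  assumes "smooth2 u" and "solves_eq p1 p3 \<beta> q0 q1 q2 u" and "rapid_decay u"
    and "q2 = 5 * (q1 - 2 * q0)" and "p3 = 0 \<or> \<beta> = 1/2"
  shows "integral UNIV (\<lambda>x. (u x t1)\<^sup>2) = integral UNIV (\<lambda>x. (u x t2)\<^sup>2)"
proof (rule integral_conserved[where H = "Dt (\<lambda>x t. (u x t)\<^sup>2)"
      and G = "\<lambda>x t. flux p1 p3 q0 q1 (u x t) (Dx 1 u x t) (Dx 2 u x t) (Dx 3 u x t) (Dx 4 u x t)"])
  show "continuous_on UNIV (\<lambda>p. Dt (\<lambda>x t. (u x t)\<^sup>2) (fst p) (snd p))"
    unfolding Dt_square(1)[OF assms(1)]
    by (intro continuous_intros smooth2_continuous smooth2_partial_t(1) assms(1))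
  show "continuous_on UNIV
      (\<lambda>t. flux p1 p3 q0 q1 (u x t) (Dx 1 u x t) (Dx 2 u x t) (Dx 3 u x t) (Dx 4 u x t))" for x
    unfolding flux_def
    by (intro continuous_intros continuous_on_smooth2_t smooth2_Dx assms(1))
  show "continuous_on UNIV (\<lambda>x. (u x t)\<^sup>2)" for t
    by (intro continuous_intros continuous_on_smooth2_x assms(1))
  show "\<exists>g. g integrable_on UNIV \<and> (\<forall>x. \<bar>(u x t)\<^sup>2\<bar> \<le> g x)" for t
    using square_le_inverse_1_plus_square[OF assms(3), of t]
      integrable_on_cmult_left[OF integrable_inverse_1_plus_square_UNIV] by auto
  show "((\<lambda>s. (u x s)\<^sup>2) has_real_derivative Dt (\<lambda>x t. (u x t)\<^sup>2) x t) (at t)" for x t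
    by (rule Dt_square(2)[OF assms(1)])
  show "((\<lambda>y. flux p1 p3 q0 q1 (u y t) (Dx 1 u y t) (Dx 2 u y t) (Dx 3 u y t) (Dx 4 u y t))
      has_real_derivative Dt (\<lambda>x t. (u x t)\<^sup>2) x t) (at x)" for x t
    by (rule local_conservation_law[OF assms(1,2,4,5)])
  show "\<exists>K. \<forall>x t. a \<le> t \<longrightarrow> t \<le> b \<longrightarrow> 1 \<le> \<bar>x\<bar> \<longrightarrow>
      \<bar>flux p1 p3 q0 q1 (u x t) (Dx 1 u x t) (Dx 2 u x t) (Dx 3 u x t) (Dx 4 u x t)\<bar> \<le> K / \<bar>x\<bar>" for a b
    by (rule flux_decay[OF assms(3)])
qed

theorem mainTheorem5:
  fixes p1 p3 \<beta> q0 q1 q2 :: real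
  assumes "q2 = 5 * (q1 - 2 * q0)"
    and "p3 = 0 \<or> \<beta> = 1/2"
  shows "(\<exists>F. is_poly5 F \<and>
            (\<forall>u. smooth2 u \<and> solves_eq p1 p3 \<beta> q0 q1 q2 u \<longrightarrow>
               (\<forall>x t. Dt (\<lambda>y s. (u y s)\<^sup>2) x t =
                  deriv (\<lambda>y. F (u y t) (Dx 1 u y t) (Dx 2 u y t) (Dx 3 u y t) (Dx 4 u y t)) x)))
       \<and> (\<forall>u. smooth2 u \<and> solves_eq p1 p3 \<beta> q0 q1 q2 u \<and> rapid_decay u \<longrightarrow>
            (\<forall>t1 t2. integral UNIV (\<lambda>x. (u x t1)\<^sup>2) = integral UNIV (\<lambda>x. (u x t2)\<^sup>2)))"
proof (intro conjI exI[of _ "flux p1 p3 q0 q1"] allI impI)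
  show "is_poly5 (flux p1 p3 q0 q1)"
    by (rule is_poly5_flux)
  show "Dt (\<lambda>y s. (u y s)\<^sup>2) x t =
      deriv (\<lambda>y. flux p1 p3 q0 q1 (u y t) (Dx 1 u y t) (Dx 2 u y t) (Dx 3 u y t) (Dx 4 u y t)) x"
    if "smooth2 u \<and> solves_eq p1 p3 \<beta> q0 q1 q2 u" for u x t
    using local_conservation_law[OF _ _ assms] that by (blast intro: DERIV_imp_deriv[symmetric])
  show "integral UNIV (\<lambda>x. (u x t1)\<^sup>2) = integral UNIV (\<lambda>x. (u x t2)\<^sup>2)"
    if "smooth2 u \<and> solves_eq p1 p3 \<beta> q0 q1 q2 u \<and> rapid_decay u" for u t1 t2
    using integral_square_conserved[OF _ _ _ assms] that by blast
qed

end
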